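(* For all integers $b>0$ and $n>0$, $\sum_{i=0}^{n}\Big(2^{bi}\prod_{j=i}^{n}(1-2^j)\Big)<0.$ *)

theory Defs
  imports Main
begin

end

theory Submission
  imports Defs
begin

text \<open>
  Put \<open>S n = \<Sum>i=0..n. q^(b*i) * (\<Prod>j=i..n. 1 - q^j)\<close>. Splitting off the last factor gives
  \<open>S (n+1) = (1 - q^(n+1)) * (S n + q^(b*(n+1)))\<close>, so it suffices to show that
  \<open>S n + q^(b*(n+1)) > 0\<close>. This quantity is \<open>q^b * sym_seq q (b-1) n\<close>, where \<open>sym_seq\<close> is defined by a
  recurrence in \<open>n\<close> that turns out to be symmetric in its two indices. Unfolding the recurrence
  twice, \<open>sym_seq q m (n+2)\<close> is a positive combination of \<open>sym_seq q m n\<close> and a power of \<open>q\<close> as long as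
  \<open>n + 2 \<le> m + 1\<close>; with symmetry this covers all index pairs.
\<close>

fun sym_seq :: "'a::linordered_idom \<Rightarrow> nat \<Rightarrow> nat \<Rightarrow> 'a" where
  "sym_seq q m 0 = 1"
| "sym_seq q m (Suc n) = q ^ ((m+1) * (n+1)) - (q ^ (n+1) - 1) * sym_seq q m n"

lemma sym_seq_Suc_left:
  "sym_seq q (Suc m) n = q ^ ((m+1) * (n+1)) - (q ^ (m+1) - 1) * sym_seq q m n"
proof (induction n)
  case 0
  then show ?case by simp
next
  case (Suc n)
  have e1: "q ^ ((Suc m + 1) * (n+1)) = q ^ ((m+1) * (n+1)) * q ^ (n+1)"
    by (simp add: power_add[symmetric] algebra_simps)
  have e2: "q ^ ((m+1) * (Suc n + 1)) = q ^ ((m+1) * (n+1)) * q ^ (m+1)"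
    by (simp add: power_add[symmetric] algebra_simps)
  have "sym_seq q (Suc m) (Suc n)
      = q ^ ((m+1) * (n+1)) * q ^ (n+1)
        - (q ^ (n+1) - 1) * (q ^ ((m+1) * (n+1)) - (q ^ (m+1) - 1) * sym_seq q m n)"
    using Suc e1 by simp
  also have "\<dots> = q ^ ((m+1) * (n+1)) * q ^ (m+1)
        - (q ^ (m+1) - 1) * (q ^ ((m+1) * (n+1)) - (q ^ (n+1) - 1) * sym_seq q m n)"
    by (simp add: algebra_simps)
  also have "\<dots> = q ^ ((m+1) * (Suc n + 1)) - (q ^ (m+1) - 1) * sym_seq q m (Suc n)"
    unfolding e2 by simp
  finally show ?case .
qed

lemma sym_seq_commute: "sym_seq q m n = sym_seq q n m"
proof (induction m arbitrary: n)
  case 0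
  show ?case by (induction n) (simp_all add: power_add mult.commute)
next
  case (Suc m)
  then show ?case by (simp add: sym_seq_Suc_left mult.commute)
qed

lemma sym_seq_Suc_Suc:
  "sym_seq q m (Suc (Suc n)) = q ^ ((m+1) * (n+1)) * (q ^ (m+1) - q ^ (n+2) + 1)
     + (q ^ (n+2) - 1) * (q ^ (n+1) - 1) * sym_seq q m n"
proof -
  have "q ^ ((m+1) * (Suc n + 1)) = q ^ ((m+1) * (n+1)) * q ^ (m+1)"
    by (simp add: power_add[symmetric] algebra_simps)
  then show ?thesis by (simp only: sym_seq.simps) (simp add: algebra_simps)
qed

lemma sym_seq_pos_below_diagonal:
  assumes "q > 1" and "n \<le> m + 1"
  shows "sym_seq q m n > 0"
  using assms(2)
proof (induction n rule: nat_less_induct)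
  case (1 n)
  consider "n = 0" | "n = 1" | k where "n = Suc (Suc k)"
    by (metis One_nat_def not0_implies_Suc)
  then show ?case
  proof cases
    case 1
    then show ?thesis by simp
  next
    case 2
    have "q ^ 1 \<le> q ^ (m+1)"
      using assms(1) by (intro power_increasing) auto
    then show ?thesis using 2 by simp
  next
    case (3 k)
    have "q ^ (k+2) \<le> q ^ (m+1)"
      using 1(2) 3 assms(1) by (intro power_increasing) auto
    then have "q ^ (m+1) - q ^ (k+2) + 1 > 0" by linarith
    then have "q ^ ((m+1) * (k+1)) * (q ^ (m+1) - q ^ (k+2) + 1) > 0"
      using assms(1) by (intro mult_pos_pos) auto
    moreover have "(q ^ (k+2) - 1) * (q ^ (k+1) - 1) * sym_seq q m k > 0"
      using 1 3 one_less_power[OF assms(1), of "k+2"] one_less_power[OF assms(1), of "k+1"]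
      by (intro mult_pos_pos) auto
    ultimately show ?thesis unfolding 3 sym_seq_Suc_Suc by (rule add_pos_pos)
  qed
qed

lemma sym_seq_pos: "q > 1 \<Longrightarrow> sym_seq q m n > 0"
  using sym_seq_pos_below_diagonal[of q m n] sym_seq_pos_below_diagonal[of q n m]
  by (cases "n \<le> m + 1") (auto simp: sym_seq_commute)

definition weighted_prod_sum :: "'a::comm_ring_1 \<Rightarrow> nat \<Rightarrow> nat \<Rightarrow> 'a" where
  "weighted_prod_sum q b n = (\<Sum>i=0..n. q ^ (b * i) * (\<Prod>j=i..n. 1 - q ^ j))"

lemma weighted_prod_sum_Suc:
  "weighted_prod_sum q b (Suc n)
     = (1 - q ^ Suc n) * (weighted_prod_sum q b n + q ^ (b * Suc n))"
proof -
  have "weighted_prod_sum q b (Suc n)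
      = (\<Sum>i=0..n. q ^ (b * i) * (\<Prod>j=i..Suc n. 1 - q ^ j)) + q ^ (b * Suc n) * (1 - q ^ Suc n)"
    unfolding weighted_prod_sum_def by (simp add: sum.atLeast0_atMost_Suc)
  also have "(\<Sum>i=0..n. q ^ (b * i) * (\<Prod>j=i..Suc n. 1 - q ^ j))
      = (\<Sum>i=0..n. q ^ (b * i) * (\<Prod>j=i..n. 1 - q ^ j) * (1 - q ^ Suc n))"
    by (intro sum.cong refl) (simp add: prod.nat_ivl_Suc' algebra_simps)
  also have "\<dots> = weighted_prod_sum q b n * (1 - q ^ Suc n)"
    unfolding weighted_prod_sum_def by (simp add: sum_distrib_right)
  finally show ?thesis by (simp add: algebra_simps)
qed

lemma weighted_prod_sum_eq_sym_seq:
  "weighted_prod_sum q (Suc m) n + q ^ (Suc m * (n+1)) = q ^ Suc m * sym_seq q m n"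
proof (induction n)
  case 0
  then show ?case by (simp add: weighted_prod_sum_def)
next
  case (Suc n)
  have "q ^ (Suc m * (Suc n + 1)) = q ^ Suc m * q ^ ((m+1) * (n+1))"
    by (simp add: power_add[symmetric] algebra_simps)
  moreover have "weighted_prod_sum q (Suc m) (Suc n)
      = (1 - q ^ Suc n) * (weighted_prod_sum q (Suc m) n + q ^ (Suc m * (n+1)))"
    using weighted_prod_sum_Suc[of q "Suc m" n] by simp
  then have "weighted_prod_sum q (Suc m) (Suc n) = (1 - q ^ Suc n) * (q ^ Suc m * sym_seq q m n)"
    by (simp only: Suc.IH)
  ultimately show ?case by (simp only: sym_seq.simps) (simp add: algebra_simps)
qed

lemma weighted_prod_sum_neg:
  fixes q :: "'a::linordered_idom"
  assumes "q > 1" and "b > 0" and "n > 0"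
  shows "weighted_prod_sum q b n < 0"
proof -
  obtain m where b: "b = Suc m" using assms(2) by (cases b) auto
  obtain k where n: "n = Suc k" using assms(3) by (cases n) auto
  have "weighted_prod_sum q b n = (1 - q ^ Suc k) * (q ^ Suc m * sym_seq q m k)"
    using weighted_prod_sum_Suc[of q b k] weighted_prod_sum_eq_sym_seq[of q m k] b n by simp
  moreover have "1 - q ^ Suc k < 0" using one_less_power[OF assms(1), of "Suc k"] by simp
  moreover have "q ^ Suc m * sym_seq q m k > 0"
    using assms(1) by (intro mult_pos_pos sym_seq_pos zero_less_power) auto
  ultimately show ?thesis by (simp add: mult_neg_pos)
qed

theorem lemma3:
  fixes b n :: nat
  assumes "b > 0" and "n > 0"
  shows "(\<Sum>i=0..n. (2::int) ^ (b * i) * (\<Prod>j=i..n. (1 - (2::int) ^ j))) < 0"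
  using weighted_prod_sum_neg[of "2::int" b n] assms by (simp add: weighted_prod_sum_def)

end
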